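(* For every $i\in\{0,2\}$, every $j\in\{0,1,2,3,4\}$ and every $n\ge0$: \[ a^j_{5,i}(5n+4)=\tfrac15 a_{5,i}(5n+4),\qquad a^0_{5,i}(5n+4)=a_{5,i}(n),\qquad a_{5,i}(5n+4)=5\,a_{5,i}(n). \]
   Context: For a partition $\pi$, $\pi'$ is its conjugate, $\mathcal O(\pi)$ the number of odd parts, and $\mathrm{srank}(\pi)=\mathcal O(\pi)-\mathcal O(\pi')$. A 5-core is a partition with no rim hook of length $5$. The cell in row $a$, column $b$ of a Young diagram is labelled by $b-a\bmod5$; for a 5-core with $r_i$ cells labelled $i$, its $n$-vector is $(n_0,\dots,n_4)=(r_0-r_1,r_1-r_2,r_2-r_3,r_3-r_4,r_4-r_0)$. For a 5-core $\kappa$ with $|\kappa|\equiv4\pmod5$, its 5-core crank is defined modulo $5$ by $c_5(\kappa)\equiv2(1+n_0-n_1-n_2+n_3)\pmod5$. $a_{5,i}(n)$ is the number of 5-cores of $n$ with $\mathrm{srank}\equiv i\pmod4$, and $a^j_{5,i}(n)$ is the number of those that moreover have $c_5\equiv j\pmod5$ (for $n\equiv4\pmod5$). *)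

theory Defs
  imports Complex_Main
begin

definition is_partition :: "nat list \<Rightarrow> bool" where
  "is_partition la \<longleftrightarrow> sorted (rev la) \<and> 0 \<notin> set la"

text \<open>Young diagram, cells (row, column), 0-indexed (labels b - a are unaffected).\<close>
definition diagram :: "nat list \<Rightarrow> (nat \<times> nat) set" where
  "diagram la = {(a, b). a < length la \<and> b < la ! a}"

definition conjugate :: "nat list \<Rightarrow> nat list" where
  "conjugate la = map (\<lambda>k. length (filter (\<lambda>x. k < x) la)) [0..<(if la = [] then 0 else hd la)]"

definition num_odd :: "nat list \<Rightarrow> nat" where
  "num_odd la = length (filter odd la)"

definition srank :: "nat list \<Rightarrow> int" where
  "srank la = int (num_odd la) - int (num_odd (conjugate la))"

definition cell_adj :: "nat \<times> nat \<Rightarrow> nat \<times> nat \<Rightarrow> bool" where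
  "cell_adj p q \<longleftrightarrow> \<bar>int (fst p) - int (fst q)\<bar> + \<bar>int (snd p) - int (snd q)\<bar> = 1"

definition rim_hook :: "nat list \<Rightarrow> nat list \<Rightarrow> nat \<Rightarrow> bool" where
  "rim_hook la mu k \<longleftrightarrow>
     is_partition mu \<and> diagram mu \<subseteq> diagram la \<and>
     (let S = diagram la - diagram mu in
        card S = k \<and>
        (\<forall>x\<in>S. \<forall>y\<in>S. (\<lambda>p q. p \<in> S \<and> q \<in> S \<and> cell_adj p q)\<^sup>*\<^sup>* x y) \<and>
        \<not> (\<exists>a b. (a, b) \<in> S \<and> (Suc a, b) \<in> S \<and> (a, Suc b) \<in> S \<and> (Suc a, Suc b) \<in> S))"

definition is_5core :: "nat list \<Rightarrow> bool" where
  "is_5core la \<longleftrightarrow> is_partition la \<and> \<not> (\<exists>mu. rim_hook la mu 5)"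

definition cores5 :: "nat \<Rightarrow> nat list set" where
  "cores5 n = {la. is_5core la \<and> sum_list la = n}"

definition r_count :: "nat list \<Rightarrow> int \<Rightarrow> nat" where
  "r_count la i = card {(a, b) \<in> diagram la. (int b - int a) mod 5 = i}"

definition nvec :: "nat list \<Rightarrow> nat \<Rightarrow> int" where
  "nvec la m = int (r_count la (int m)) - int (r_count la (int ((m + 1) mod 5)))"

definition crank5 :: "nat list \<Rightarrow> int" where
  "crank5 la = (2 * (1 + nvec la 0 - nvec la 1 - nvec la 2 + nvec la 3)) mod 5"

definition a5 :: "int \<Rightarrow> nat \<Rightarrow> nat" where
  "a5 i n = card {la \<in> cores5 n. srank la mod 4 = i}"

definition a5j :: "int \<Rightarrow> int \<Rightarrow> nat \<Rightarrow> nat" where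
  "a5j j i n = card {la \<in> cores5 n. srank la mod 4 = i \<and> crank5 la = j}"

end

theory Submission
  imports Defs
begin

text \<open>A partition is encoded by its beta-numbers \<open>\<lambda>\<^sub>i - i - 1\<close>; removing a rim hook of length \<open>k\<close>
  moves one bead \<open>k\<close> places down into a gap. Hence the 5-cores are the partitions whose beads on
  each runner \<open>r\<close> of the 5-abacus fill exactly the levels below some \<open>c\<^sub>r\<close>, where \<open>\<Sum> c\<^sub>r = 0\<close>
  and \<open>(c\<^sub>0, \<dots>, c\<^sub>4)\<close> is the n-vector. This identifies the 5-cores with \<open>\<int>\<^sup>4\<close>, on which twice
  the size is a quadratic form, the crank is an affine form modulo 5 and, modulo 4, the srank only
  depends on the size and on the parities of the \<open>c\<^sub>r + r\<close>. For each crank class \<open>j\<close> an explicit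
  affine map of \<open>\<int>\<^sup>4\<close> multiplies size + 1 by 5, preserves these parities and is a bijection onto
  the vectors of crank \<open>j\<close>. So \<open>a5j j i (5 n + 4) = a5 i n\<close> for every residue \<open>i\<close>, and summing over \<open>j\<close> gives the other two identities.\<close>

section \<open>Beta-numbers and rim hooks\<close>

definition part :: "nat list \<Rightarrow> nat \<Rightarrow> nat" where
  "part la i = (if i < length la then la ! i else 0)"

text \<open>The beta-numbers \<open>\<lambda>\<^sub>i - i - 1\<close> of all rows, including the infinitely many empty
  ones; \<open>range (beta la)\<close> is the bead set of \<open>la\<close> on the abacus.\<close>
definition beta :: "nat list \<Rightarrow> nat \<Rightarrow> int" where
  "beta la i = int (part la i) - int i - 1"

lemma part_antimono:
  assumes "is_partition la" "i \<le> j"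
  shows "part la j \<le> part la i"
  using assms sorted_rev_nth_mono[of la i j] by (auto simp: part_def is_partition_def)

lemma part_pos:
  assumes "is_partition la" "i < length la"
  shows "0 < part la i"
proof -
  have "la ! i \<in> set la" using assms(2) by simp
  then have "la ! i \<noteq> 0" using assms(1) unfolding is_partition_def by metis
  then show ?thesis using assms(2) by (simp add: part_def)
qed

lemma diagram_eq: "diagram la = {(i, j). j < part la i}"
  by (auto simp: diagram_def part_def split: if_splits)

lemma diagram_subset_iff: "diagram mu \<subseteq> diagram la \<longleftrightarrow> (\<forall>i. part mu i \<le> part la i)"
proof
  assume sub: "diagram mu \<subseteq> diagram la"
  show "\<forall>i. part mu i \<le> part la i"
  proof
    fix i
    show "part mu i \<le> part la i"
    proof (cases "part mu i = 0")
      case False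
      then have "(i, part mu i - 1) \<in> diagram mu" by (simp add: diagram_eq)
      then have "(i, part mu i - 1) \<in> diagram la" using sub by blast
      then show ?thesis by (simp add: diagram_eq)
    qed simp
  qed
qed (auto simp: diagram_eq intro: less_le_trans)

lemma beta_strict_antimono:
  assumes "is_partition la" "i < j"
  shows "beta la j < beta la i"
  using part_antimono[OF assms(1), of i j] assms(2) by (simp add: beta_def)

lemma beta_antimono: "is_partition la \<Longrightarrow> i \<le> j \<Longrightarrow> beta la j \<le> beta la i"
  using beta_strict_antimono by (fastforce simp: order_le_less)

lemma beta_beyond_length: "length la \<le> i \<Longrightarrow> beta la i = - int i - 1"
  by (simp add: beta_def part_def)

lemma beta_lower_bound: "- int i - 1 \<le> beta la i"
  by (simp add: beta_def)

lemma partition_of_antimono: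
  fixes q :: "nat \<Rightarrow> nat"
  assumes dec: "\<And>i. q (Suc i) \<le> q i" and zero: "q n = 0"
  obtains mu where "is_partition mu" and "part mu = q"
proof
  define m where "m = (LEAST i. q i = 0)"
  have "q m = 0" unfolding m_def using zero by (rule LeastI)
  moreover have mono: "i \<le> j \<Longrightarrow> q j \<le> q i" for i j
    using lift_Suc_antimono_le[of q, OF dec] by blast
  ultimately have beyond: "m \<le> i \<Longrightarrow> q i = 0" for i
    by (metis le_zero_eq)
  have below: "i < m \<Longrightarrow> q i \<noteq> 0" for i
    unfolding m_def by (rule not_less_Least)
  define mu where "mu = map q [0..<m]"
  show "part mu = q"
    using beyond by (auto simp: part_def mu_def fun_eq_iff)
  have "sorted (rev mu)"
    unfolding sorted_rev_iff_nth_mono by (auto simp: mu_def intro: mono)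
  moreover have "0 \<notin> set mu" using below by (force simp: mu_def)
  ultimately show "is_partition mu" by (simp add: is_partition_def)
qed

definition skew :: "nat list \<Rightarrow> nat list \<Rightarrow> (nat \<times> nat) set" where
  "skew la mu = diagram la - diagram mu"

definition adj_in :: "(nat \<times> nat) set \<Rightarrow> nat \<times> nat \<Rightarrow> nat \<times> nat \<Rightarrow> bool" where
  "adj_in S = (\<lambda>p q. p \<in> S \<and> q \<in> S \<and> cell_adj p q)"

lemma rim_hook_iff:
  "rim_hook la mu k \<longleftrightarrow>
     is_partition mu \<and> diagram mu \<subseteq> diagram la \<and> card (skew la mu) = k \<and>
     (\<forall>x\<in>skew la mu. \<forall>y\<in>skew la mu. (adj_in (skew la mu))\<^sup>*\<^sup>* x y) \<and>
     \<not> (\<exists>a b. (a, b) \<in> skew la mu \<and> (Suc a, b) \<in> skew la mu \<and>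
            (a, Suc b) \<in> skew la mu \<and> (Suc a, Suc b) \<in> skew la mu)"
  unfolding rim_hook_def skew_def adj_in_def Let_def ..

text \<open>The shape \<open>la/mu\<close> is a border strip in the rows \<open>a..b\<close>: consecutive rows share exactly
  one column.\<close>
definition ribbon :: "nat list \<Rightarrow> nat list \<Rightarrow> nat \<Rightarrow> nat \<Rightarrow> bool" where
  "ribbon la mu a b \<longleftrightarrow> a \<le> b \<and> part mu b < part la b \<and>
     (\<forall>r. r < a \<or> b < r \<longrightarrow> part mu r = part la r) \<and>
     (\<forall>r. a \<le> r \<and> r < b \<longrightarrow> part la (Suc r) = Suc (part mu r))"

lemma ribbon_row_nonempty:
  assumes la: "is_partition la" and rib: "ribbon la mu a b" and "a \<le> r" "r \<le> b"
  shows "part mu r < part la r"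
proof (cases "r = b")
  case False
  then have "part la (Suc r) = Suc (part mu r)" using rib assms(3,4) by (simp add: ribbon_def)
  then show ?thesis using part_antimono[OF la, of r "Suc r"] by simp
qed (use rib in \<open>simp add: ribbon_def\<close>)

lemma ribbon_part_le:
  assumes "is_partition la" "ribbon la mu a b"
  shows "part mu r \<le> part la r"
  using assms ribbon_row_nonempty[OF assms, of r] by (cases "r < a \<or> b < r") (auto simp: ribbon_def)

lemma ribbon_skew:
  assumes "is_partition la" "ribbon la mu a b"
  shows "skew la mu = Sigma {a..b} (\<lambda>r. {part mu r..<part la r})"
  using assms by (auto simp: skew_def diagram_eq ribbon_def not_less)

lemma card_ribbon:
  assumes la: "is_partition la" and rib: "ribbon la mu a b"
  shows "int (card (skew la mu)) = beta la a - beta mu b"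
proof -
  have step: "part la (Suc r) = Suc (part mu r)" if "a \<le> r" "r < b" for r
    using rib that by (simp add: ribbon_def)
  have "a \<le> b" using rib by (simp add: ribbon_def)
  then have "(\<Sum>r\<in>{a..b}. int (part la r) - int (part mu r))
      = int (part la a) - int (part mu b) + int b - int a"
    using step
  proof (induction b rule: dec_induct)
    case (step b)
    then show ?case by (simp add: sum.cl_ivl_Suc)
  qed simp
  moreover have "int (card (skew la mu)) = (\<Sum>r\<in>{a..b}. int (part la r) - int (part mu r))"
    using ribbon_part_le[OF la rib] by (simp add: ribbon_skew[OF la rib] card_SigmaI of_nat_diff)
  ultimately show ?thesis by (simp add: beta_def)
qed

text \<open>Removing a ribbon moves the bead \<open>beta la a\<close> down to the empty position \<open>beta mu b\<close>.\<close>
lemma ribbon_gap: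
  assumes la: "is_partition la" and mu: "is_partition mu" and rib: "ribbon la mu a b"
  shows "beta mu b \<notin> range (beta la)"
proof
  assume "beta mu b \<in> range (beta la)"
  then obtain r where r: "beta la r = beta mu b" by auto
  have "beta mu b < beta la b" using rib by (simp add: ribbon_def beta_def)
  moreover have "beta la (Suc b) < beta mu b"
    using beta_strict_antimono[OF mu, of b "Suc b"] rib by (simp add: ribbon_def beta_def)
  ultimately show False
    using beta_antimono[OF la, of r b] beta_antimono[OF la, of "Suc b" r] r by linarith
qed

lemma connected_skew_rows_overlap:
  assumes "(adj_in (skew la mu))\<^sup>*\<^sup>* (r0, c0) (r1, c1)" "r0 \<le> r" "r < r1"
  shows "part mu r < part la (Suc r)"
proof (rule ccontr)
  assume gap: "\<not> part mu r < part la (Suc r)"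
  have "fst z \<le> r" if "(adj_in (skew la mu))\<^sup>*\<^sup>* (r0, c0) z" for z
    using that
  proof (induction rule: rtranclp_induct)
    case (step u v)
    show ?case
    proof (rule ccontr)
      assume "\<not> fst v \<le> r"
      with step have "fst u = r" "fst v = Suc r" "snd v = snd u"
        by (auto simp: adj_in_def cell_adj_def)
      moreover have "u \<in> skew la mu" "v \<in> skew la mu" using step(2) by (auto simp: adj_in_def)
      ultimately show False
        using gap by (cases u, cases v) (auto simp: skew_def diagram_eq)
    qed
  qed (use assms in simp)
  then show False using assms by fastforce
qed

lemma rim_hook_rows_overlap_once:
  assumes la: "is_partition la" and rh: "rim_hook la mu k"
    and "(r0, c0) \<in> skew la mu" "(r1, c1) \<in> skew la mu" "r0 \<le> r" "r < r1"
  shows "part la (Suc r) = Suc (part mu r)"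
proof -
  have skew_eq: "skew la mu = {(r, c). part mu r \<le> c \<and> c < part la r}"
    by (auto simp: skew_def diagram_eq)
  have "(adj_in (skew la mu))\<^sup>*\<^sup>* (r0, c0) (r1, c1)"
    using rh assms(3,4) by (auto simp: rim_hook_iff)
  then have "part mu r < part la (Suc r)"
    using connected_skew_rows_overlap assms(5,6) by blast
  moreover have "part la (Suc r) \<le> Suc (part mu r)"
  proof (rule ccontr)
    assume "\<not> ?thesis"
    moreover have "part la (Suc r) \<le> part la r" "part mu (Suc r) \<le> part mu r"
      using part_antimono[OF la] rh part_antimono by (auto simp: rim_hook_iff)
    ultimately have "(r, part mu r) \<in> skew la mu \<and> (Suc r, part mu r) \<in> skew la mu \<and>
        (r, Suc (part mu r)) \<in> skew la mu \<and> (Suc r, Suc (part mu r)) \<in> skew la mu"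
      by (auto simp: skew_eq)
    then show False using rh by (auto simp: rim_hook_iff)
  qed
  ultimately show ?thesis by simp
qed

lemma rim_hook_imp_ribbon:
  assumes la: "is_partition la" and rh: "rim_hook la mu k" and "0 < k"
  obtains a b where "ribbon la mu a b"
proof -
  have sub: "part mu r \<le> part la r" for r
    using rh by (simp add: rim_hook_iff diagram_subset_iff)
  have skew_eq: "skew la mu = {(r, c). part mu r \<le> c \<and> c < part la r}"
    by (auto simp: skew_def diagram_eq)
  define R where "R = {r. part mu r < part la r}"
  have "R \<subseteq> {..<length la}" by (auto simp: R_def part_def)
  then have "finite R" by (rule finite_subset) simp
  have "skew la mu \<noteq> {}" using rh \<open>0 < k\<close> by (auto simp: rim_hook_iff)
  then have "R \<noteq> {}" by (auto simp: skew_eq R_def intro: le_less_trans)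
  define a b where "a = Min R" and "b = Max R"
  have "a \<in> R" "b \<in> R" "a \<le> b"
    using \<open>finite R\<close> \<open>R \<noteq> {}\<close> by (simp_all add: a_def b_def)
  have outside: "part mu r = part la r" if "r < a \<or> b < r" for r
  proof (rule ccontr)
    assume "part mu r \<noteq> part la r"
    then have "r \<in> R" using sub[of r] by (simp add: R_def)
    then have "a \<le> r" "r \<le> b" using \<open>finite R\<close> by (simp_all add: a_def b_def)
    then show False using that by linarith
  qed
  have "(a, part mu a) \<in> skew la mu" "(b, part mu b) \<in> skew la mu"
    using \<open>a \<in> R\<close> \<open>b \<in> R\<close> by (auto simp: skew_eq R_def)
  then have "part la (Suc r) = Suc (part mu r)" if "a \<le> r" "r < b" for r
    using rim_hook_rows_overlap_once[OF la rh] that by blast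
  then show thesis
    using \<open>a \<le> b\<close> \<open>b \<in> R\<close> outside by (intro that) (auto simp: ribbon_def R_def)
qed

lemma ribbon_connected:
  assumes la: "is_partition la" and mu: "is_partition mu" and rib: "ribbon la mu a b"
    and z: "z \<in> skew la mu"
  shows "(adj_in (skew la mu))\<^sup>*\<^sup>* z (b, part mu b)"
proof -
  let ?adj = "adj_in (skew la mu)"
  have skew: "skew la mu = Sigma {a..b} (\<lambda>r. {part mu r..<part la r})"
    using ribbon_skew[OF la rib] .
  have step: "part la (Suc r) = Suc (part mu r)" if "a \<le> r" "r < b" for r
    using rib that by (simp add: ribbon_def)
  have along_row: "?adj\<^sup>*\<^sup>* (r, part mu r + d) (r, part mu r)"
    if "a \<le> r" "r \<le> b" "part mu r + d < part la r" for r d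
    using that(3)
  proof (induction d)
    case (Suc d)
    then have "?adj (r, part mu r + Suc d) (r, part mu r + d)"
      using that(1,2) by (auto simp: adj_in_def skew cell_adj_def)
    moreover have "part mu r + d < part la r" using Suc.prems by simp
    ultimately show ?case using Suc.IH by (meson converse_rtranclp_into_rtranclp)
  qed simp
  have down: "?adj\<^sup>*\<^sup>* (r, part mu r) (b, part mu b)" if "a \<le> r" "r \<le> b" for r
    using that
  proof (induction "b - r" arbitrary: r)
    case (Suc m)
    then have "r < b" by simp
    have "part mu (Suc r) \<le> part mu r" using part_antimono[OF mu] by simp
    then obtain d where d: "part mu r = part mu (Suc r) + d" using le_Suc_ex by blast
    have "part mu r < part la r" using ribbon_row_nonempty[OF la rib] Suc.prems by simp
    then have "?adj (r, part mu r) (Suc r, part mu r)"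
      using Suc.prems \<open>r < b\<close> step[of r] d by (auto simp: adj_in_def skew cell_adj_def)
    moreover have "?adj\<^sup>*\<^sup>* (Suc r, part mu r) (Suc r, part mu (Suc r))"
      using along_row[of "Suc r" d] d step[of r] Suc.prems \<open>r < b\<close> by simp
    moreover have "?adj\<^sup>*\<^sup>* (Suc r, part mu (Suc r)) (b, part mu b)"
      using Suc \<open>r < b\<close> by simp
    ultimately show ?case by (meson converse_rtranclp_into_rtranclp rtranclp_trans)
  qed simp
  obtain r c where "z = (r, c)" "a \<le> r" "r \<le> b" "part mu r \<le> c" "c < part la r"
    using z skew by auto
  moreover from this obtain d where "c = part mu r + d" using le_Suc_ex by blast
  ultimately show ?thesis using along_row down by (meson rtranclp_trans)
qed

lemma ribbon_imp_rim_hook: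
  assumes la: "is_partition la" and mu: "is_partition mu" and rib: "ribbon la mu a b"
  shows "rim_hook la mu (card (skew la mu))"
proof -
  let ?adj = "adj_in (skew la mu)"
  have skew: "skew la mu = Sigma {a..b} (\<lambda>r. {part mu r..<part la r})"
    using ribbon_skew[OF la rib] .
  have "diagram mu \<subseteq> diagram la"
    using ribbon_part_le[OF la rib] by (simp add: diagram_subset_iff)
  moreover have "?adj\<^sup>*\<^sup>* x y" if "x \<in> skew la mu" "y \<in> skew la mu" for x y
  proof -
    have "symp ?adj" by (auto simp: symp_def adj_in_def cell_adj_def)
    then have "?adj\<^sup>*\<^sup>* (b, part mu b) y"
      using ribbon_connected[OF la mu rib that(2)] by (meson sympD symp_rtranclp)
    then show ?thesis using ribbon_connected[OF la mu rib that(1)] by (meson rtranclp_trans)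
  qed
  moreover have "\<not> ((r, c) \<in> skew la mu \<and> (Suc r, c) \<in> skew la mu \<and>
                    (r, Suc c) \<in> skew la mu \<and> (Suc r, Suc c) \<in> skew la mu)" for r c
  proof
    assume square: "(r, c) \<in> skew la mu \<and> (Suc r, c) \<in> skew la mu \<and>
                    (r, Suc c) \<in> skew la mu \<and> (Suc r, Suc c) \<in> skew la mu"
    then have "a \<le> r" "r < b" using skew by auto
    then have "part la (Suc r) = Suc (part mu r)" using rib by (simp add: ribbon_def)
    then show False using square skew by auto
  qed
  ultimately show ?thesis using mu by (simp add: rim_hook_iff)
qed

lemma gap_between_beads:
  assumes la: "is_partition la" and "t < beta la a" and gap: "t \<notin> range (beta la)"
  obtains b where "a \<le> b" "t < beta la b" "beta la (Suc b) < t"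
proof -
  define A where "A = {r. t < beta la r}"
  have "A \<subseteq> {..< nat (beta la 0 - t)}"
  proof
    fix r assume "r \<in> A"
    moreover have "beta la r + int r \<le> beta la 0" using part_antimono[OF la, of 0 r] by (simp add: beta_def)
    ultimately show "r \<in> {..< nat (beta la 0 - t)}" by (simp add: A_def)
  qed
  then have "finite A" by (rule finite_subset) simp
  have "a \<in> A" using assms(2) by (simp add: A_def)
  define b where "b = Max A"
  have "b \<in> A" using Max_in[OF \<open>finite A\<close>] \<open>a \<in> A\<close> by (auto simp: b_def)
  moreover have "a \<le> b" using \<open>finite A\<close> \<open>a \<in> A\<close> by (simp add: b_def)
  moreover have "Suc b \<notin> A" using \<open>finite A\<close> by (metis Max_ge Suc_n_not_le_n b_def)
  moreover have "beta la (Suc b) \<noteq> t" using gap by (metis rangeI)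
  ultimately show thesis using that by (simp add: A_def)
qed

lemma gap_imp_ribbon:
  assumes la: "is_partition la" and "0 < k" and gap: "beta la a - int k \<notin> range (beta la)"
  obtains mu b where "is_partition mu" "ribbon la mu a b" "beta mu b = beta la a - int k"
proof -
  define t where "t = beta la a - int k"
  obtain b where "a \<le> b" "t < beta la b" "beta la (Suc b) < t"
    using gap_between_beads[OF la, of t a] \<open>0 < k\<close> gap by (auto simp: t_def)
  define P where "P = part la"
  have P_antimono: "i \<le> j \<Longrightarrow> P j \<le> P i" for i j using part_antimono[OF la] by (simp add: P_def)
  have t_low: "0 \<le> t + int b + 1" using \<open>beta la (Suc b) < t\<close> beta_lower_bound[of "Suc b" la] by simp
  have P_b: "t + int b + 1 < int (P b)" using \<open>t < beta la b\<close> by (simp add: beta_def P_def)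
  have P_Suc_b: "int (P (Suc b)) \<le> t + int b + 1"
    using \<open>beta la (Suc b) < t\<close> by (simp add: beta_def P_def)
  have P_pos: "1 \<le> P (Suc r)" if "r < b" for r
    using P_b t_low P_antimono[of "Suc r" b] that by simp
  txt \<open>Rows \<open>a..b-1\<close> of \<open>mu\<close> keep one cell less than the row below them in \<open>la\<close>, and row \<open>b\<close>
    is cut back so that its bead lands on the gap \<open>t\<close>.\<close>
  define q where "q r = (if r < a then P r else if r < b then P (Suc r) - 1
                         else if r = b then nat (t + int b + 1) else P r)" for r
  have q_le: "q r \<le> P r" for r
    using P_antimono[of r "Suc r"] P_b t_low by (auto simp: q_def)
  have "q (Suc r) \<le> q r" for r
  proof -
    consider "Suc r < a" | "Suc r = a" | "a \<le> r" "Suc r < b" | "a \<le> r" "Suc r = b" | "b \<le> r"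
      by linarith
    then show ?thesis
    proof cases
      case 2
      then show ?thesis using q_le[of a] P_antimono[of r "Suc r"] by (simp add: q_def)
    next
      case 4
      then show ?thesis using t_low P_b by (simp add: q_def)
    next
      case 5
      then show ?thesis using P_antimono[of r "Suc r"] P_Suc_b t_low by (auto simp: q_def)
    qed (use P_antimono[of r "Suc r"] P_antimono[of "Suc r" "Suc (Suc r)"] in \<open>auto simp: q_def\<close>)
  qed
  moreover have "q (length la) = 0" using q_le[of "length la"] by (simp add: P_def part_def)
  ultimately obtain mu where mu: "is_partition mu" "part mu = q" by (rule partition_of_antimono)
  have "P (Suc r) = Suc (q r)" if "a \<le> r" "r < b" for r
    using that P_pos[of r] by (simp add: q_def)
  then have "ribbon la mu a b"
    using \<open>a \<le> b\<close> P_b t_low mu(2) by (auto simp: ribbon_def q_def P_def)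
  moreover have "beta mu b = t" using mu(2) t_low \<open>a \<le> b\<close> by (simp add: beta_def q_def)
  ultimately show thesis using mu(1) that by (simp add: t_def)
qed

lemma ex_rim_hook_iff_gap:
  assumes la: "is_partition la" and "0 < k"
  shows "(\<exists>mu. rim_hook la mu k) \<longleftrightarrow> (\<exists>a. beta la a - int k \<notin> range (beta la))"
proof
  assume "\<exists>mu. rim_hook la mu k"
  then obtain mu where rh: "rim_hook la mu k" ..
  then obtain a b where rib: "ribbon la mu a b" using rim_hook_imp_ribbon[OF la _ \<open>0 < k\<close>] by blast
  have mu: "is_partition mu" and "card (skew la mu) = k" using rh by (auto simp: rim_hook_iff)
  then have "beta la a - int k = beta mu b" using card_ribbon[OF la rib] by simp
  then show "\<exists>a. beta la a - int k \<notin> range (beta la)" using ribbon_gap[OF la mu rib] by metis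
next
  assume "\<exists>a. beta la a - int k \<notin> range (beta la)"
  then obtain a where "beta la a - int k \<notin> range (beta la)" ..
  then obtain mu b where mu: "is_partition mu" and rib: "ribbon la mu a b"
    and "beta mu b = beta la a - int k"
    using gap_imp_ribbon[OF la \<open>0 < k\<close>] by blast
  then have "card (skew la mu) = k" using card_ribbon[OF la rib] by simp
  then show "\<exists>mu. rim_hook la mu k" using ribbon_imp_rim_hook[OF la mu rib] by auto
qed

lemma is_5core_iff_beta_closed:
  "is_5core la \<longleftrightarrow> is_partition la \<and> (\<forall>y\<in>range (beta la). y - 5 \<in> range (beta la))"
  using ex_rim_hook_iff_gap[of la 5] by (auto simp: is_5core_def)

section \<open>Partitions from bead sets\<close>

lemma partition_eq_iff_part_eq:
  assumes "is_partition la" "is_partition mu"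
  shows "la = mu \<longleftrightarrow> part la = part mu"
proof
  assume part: "part la = part mu"
  have "\<not> length la < length mu" if "is_partition mu" "part la = part mu" for la mu
  proof
    assume "length la < length mu"
    then have "0 < part mu (length la)" using part_pos[OF that(1)] by simp
    moreover have "part la (length la) = 0" by (simp add: part_def)
    ultimately show False using that(2) by simp
  qed
  then have "length la = length mu" using assms part by (metis linorder_neqE_nat)
  then show "la = mu"
    using part by (intro nth_equalityI) (auto simp: part_def fun_eq_iff, metis)
qed simp

lemma card_greater_strict_antimono:
  fixes f :: "nat \<Rightarrow> int"
  assumes "\<And>i j. i < j \<Longrightarrow> f j < f i"
  shows "card {y \<in> range f. f a < y} = a"
proof -
  have "f i < f j \<longleftrightarrow> j < i" for i j using assms by (metis linorder_neqE_nat order_less_asym)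
  then have "{y \<in> range f. f a < y} = f ` {..<a}" by auto
  moreover have "inj f" using assms by (metis injI linorder_neqE_nat order_less_irrefl)
  ultimately show ?thesis by (simp add: card_image inj_on_subset)
qed

lemma partition_eq_if_beta_range_eq:
  assumes la: "is_partition la" and mu: "is_partition mu"
    and range: "range (beta la) = range (beta mu)"
  shows "la = mu"
proof -
  have "beta la a = beta mu a" for a
  proof -
    obtain b where b: "beta la a = beta mu b" using range by (metis rangeI image_iff)
    then have "a = b"
      using card_greater_strict_antimono[of "beta la" a] card_greater_strict_antimono[of "beta mu" b]
        beta_strict_antimono[OF la] beta_strict_antimono[OF mu] range by simp
    with b show ?thesis by simp
  qed
  then show ?thesis by (simp add: partition_eq_iff_part_eq[OF la mu] fun_eq_iff beta_def)
qed

lemma image_neg_atLeast: "(\<lambda>i. - int i - 1) ` {n..} = {..< - int n}"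
proof
  show "{..< - int n} \<subseteq> (\<lambda>i. - int i - 1) ` {n..}"
  proof
    fix y assume "y \<in> {..< - int n}"
    then have "y = - int (nat (- y - 1)) - 1" "nat (- y - 1) \<in> {n..}" by auto
    then show "y \<in> (\<lambda>i. - int i - 1) ` {n..}" by blast
  qed
qed auto

lemma beta_range_exists:
  fixes F :: "int set"
  assumes "finite F" "F \<subseteq> {- int L..}" "card F = L"
  obtains la where "is_partition la" "range (beta la) = F \<union> {..< - int L}"
proof -
  define xs where "xs = sorted_list_of_set F"
  have sorted: "sorted_wrt (<) xs" and set: "set xs = F" and len: "length xs = L"
    using assms by (simp_all add: xs_def strict_sorted_list_of_set)
  define X where "X = (!) (rev xs)"
  have X_strict: "X (Suc a) < X a" if "Suc a < L" for a
    using sorted_wrt_nth_less[of "\<lambda>x y. y < x" "rev xs" a "Suc a"] sorted that len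
    by (simp add: X_def sorted_wrt_rev)
  have X_lower: "- int a - 1 \<le> X a" if "a < L" for a
  proof -
    have lower: "xs ! 0 + int i \<le> xs ! i" if "i < L" for i
      using that
    proof (induction i)
      case (Suc i)
      then show ?case using sorted_wrt_nth_less[OF sorted, of i "Suc i"] len by simp
    qed simp
    have "xs ! 0 + int (L - Suc a) \<le> X a" using lower[of "L - Suc a"] that len by (simp add: X_def rev_nth)
    moreover have "- int L \<le> xs ! 0" using assms(2) set len that nth_mem[of 0 xs] by auto
    ultimately show ?thesis using that by (simp add: of_nat_diff)
  qed
  define q where "q a = (if a < L then nat (X a + int a + 1) else 0)" for a
  have "q (Suc a) \<le> q a" for a
    using X_strict[of a] X_lower[of "Suc a"] by (auto simp: q_def)
  moreover have "q L = 0" by (simp add: q_def)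
  ultimately obtain la where la: "is_partition la" "part la = q" by (rule partition_of_antimono)
  have beta: "beta la a = (if a < L then X a else - int a - 1)" for a
    using X_lower[of a] la(2) by (cases "a < L") (simp_all add: beta_def q_def)
  have "range (beta la) = X ` {..<L} \<union> (\<lambda>a. - int a - 1) ` {L..}"
    by (auto simp: beta image_iff not_less)
  also have "X ` {..<L} = F"
    using len set by (simp add: X_def lessThan_atLeast0 nth_image)
  finally show thesis using la(1) that by (simp add: image_neg_atLeast)
qed

section \<open>The 5-abacus\<close>

text \<open>\<open>c r\<close> is the level of the lowest gap on runner \<open>r\<close> of the 5-abacus, and there is no bead
  above it.\<close>
definition abacus :: "nat list \<Rightarrow> (nat \<Rightarrow> int) \<Rightarrow> bool" where
  "abacus la c \<longleftrightarrow> range (beta la) = {y. y div 5 < c (nat (y mod 5))}"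

lemma int_down_closed_eq_lessThan:
  fixes A :: "int set"
  assumes "m \<in> A" and bounded: "\<And>x. x \<in> A \<Longrightarrow> x \<le> B" and closed: "\<And>x. x \<in> A \<Longrightarrow> x - 1 \<in> A"
  obtains c where "A = {..<c}"
proof
  define M where "M = Max (A \<inter> {m..B})"
  have fin: "finite (A \<inter> {m..B})" by simp
  have "m \<in> A \<inter> {m..B}" using assms(1) bounded by auto
  then have "A \<inter> {m..B} \<noteq> {}" by blast
  then have "M \<in> A \<inter> {m..B}" unfolding M_def using fin by (rule Max_in[rotated])
  then have "M \<in> A" by simp
  have M_max: "x \<le> M" if "x \<in> A" "m \<le> x" for x
    using that bounded fin by (metis IntI Max_ge atLeastAtMost_iff M_def)
  have down: "M - int d \<in> A" for d
  proof (induction d)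
    case (Suc d)
    then show ?case using closed[of "M - int d"] by (simp add: algebra_simps)
  qed (use \<open>M \<in> A\<close> in simp)
  have "x \<in> A" if "x < M + 1" for x
  proof -
    have "x = M - int (nat (M - x))" using that by simp
    then show ?thesis using down by metis
  qed
  moreover have "x < M + 1" if "x \<in> A" for x
    using M_max[OF that] M_max[OF assms(1)] by (cases "m \<le> x") auto
  ultimately show "A = {..<M + 1}" by auto
qed

lemma is_5core_imp_abacus:
  assumes "is_5core la"
  obtains c where "abacus la c"
proof -
  have la: "is_partition la" and closed: "\<And>y. y \<in> range (beta la) \<Longrightarrow> y - 5 \<in> range (beta la)"
    using assms by (auto simp: is_5core_iff_beta_closed)
  have "\<exists>c. {m. int r + 5 * m \<in> range (beta la)} = {..<c}" for r
  proof -
    let ?m = "- int (length la) - int r - 1"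
    have "beta la (nat (- int r - 5 * ?m - 1)) = int r + 5 * ?m"
      by (subst beta_beyond_length) auto
    then have "?m \<in> {m. int r + 5 * m \<in> range (beta la)}" by (metis mem_Collect_eq rangeI)
    moreover have "x \<le> \<bar>beta la 0\<bar>" if "x \<in> {m. int r + 5 * m \<in> range (beta la)}" for x
    proof -
      have "int r + 5 * x \<in> range (beta la)" using that by simp
      then obtain i where "int r + 5 * x = beta la i" by (rule rangeE)
      moreover have "beta la i \<le> beta la 0" using beta_antimono[OF la] by simp
      ultimately show ?thesis by linarith
    qed
    moreover have "x - 1 \<in> {m. int r + 5 * m \<in> range (beta la)}"
      if "x \<in> {m. int r + 5 * m \<in> range (beta la)}" for x
      using that closed[of "int r + 5 * x"] by (simp add: algebra_simps)
    ultimately show ?thesis by (metis int_down_closed_eq_lessThan)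
  qed
  then obtain c where c: "\<And>r. {m. int r + 5 * m \<in> range (beta la)} = {..<c r}" by metis
  have "y \<in> range (beta la) \<longleftrightarrow> y div 5 < c (nat (y mod 5))" for y
  proof -
    have "y = int (nat (y mod 5)) + 5 * (y div 5)" by simp
    then show ?thesis using c[of "nat (y mod 5)"] by (metis lessThan_iff mem_Collect_eq)
  qed
  then show thesis using that by (auto simp: abacus_def)
qed

lemma abacus_imp_is_5core:
  assumes "is_partition la" "abacus la c"
  shows "is_5core la"
proof -
  have "(y - 5) div 5 = y div 5 - 1" "(y - 5) mod 5 = y mod 5" for y :: int by simp_all
  then show ?thesis using assms by (auto simp: is_5core_iff_beta_closed abacus_def)
qed

lemma abacus_empty: "abacus [] (\<lambda>_. 0)"
proof -
  have "beta [] = (\<lambda>i. - int i - 1)" by (simp add: fun_eq_iff beta_def part_def)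
  then have "range (beta []) = {..<0}" using image_neg_atLeast[of 0] by simp
  then show ?thesis by (auto simp: abacus_def)
qed

lemma sum_int_telescope:
  fixes F g :: "int \<Rightarrow> int"
  assumes "a \<le> b" "\<And>m. F (m + 1) - F m = g m"
  shows "(\<Sum>m\<in>{a..<b}. g m) = F b - F a"
proof -
  obtain d where b: "b = a + int d" using assms(1) by (metis zle_iff_zadd)
  have "(\<Sum>m\<in>{a..<a + int d}. g m) = F (a + int d) - F a"
  proof (induction d)
    case (Suc d)
    have "{a..<a + int (Suc d)} = insert (a + int d) {a..<a + int d}" by auto
    then show ?case using Suc assms(2)[of "a + int d"] by (simp add: algebra_simps)
  qed simp
  then show ?thesis using b by simp
qed

lemma le_sum_nat_levels:
  fixes c :: "nat \<Rightarrow> int"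
  assumes "r < 5"
  shows "c r \<le> int (\<Sum>r<5. nat (c r))"
proof -
  have "nat (c r) \<le> (\<Sum>r<5. nat (c r))" using assms by (intro member_le_sum) auto
  then show ?thesis by linarith
qed

lemma sum_below_levels:
  fixes f :: "int \<Rightarrow> int" and c :: "nat \<Rightarrow> int"
  assumes "\<And>r. r < 5 \<Longrightarrow> - int K \<le> c r"
  shows "(\<Sum>y | - 5 * int K \<le> y \<and> y div 5 < c (nat (y mod 5)). f y)
       = (\<Sum>r<5. \<Sum>m\<in>{- int K..<c r}. f (int r + 5 * m))"
proof -
  let ?pos = "\<lambda>(r :: nat, m :: int). int r + 5 * m"
  have "bij_betw ?pos (Sigma {..<5} (\<lambda>r. {- int K..<c r}))
          {y. - 5 * int K \<le> y \<and> y div 5 < c (nat (y mod 5))}"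
  proof (rule bij_betw_byWitness[where f' = "\<lambda>y. (nat (y mod 5), y div 5)"])
    show "?pos ` Sigma {..<5} (\<lambda>r. {- int K..<c r})
            \<subseteq> {y. - 5 * int K \<le> y \<and> y div 5 < c (nat (y mod 5))}"
      by auto
    show "(\<lambda>y. (nat (y mod 5), y div 5)) ` {y. - 5 * int K \<le> y \<and> y div 5 < c (nat (y mod 5))}
            \<subseteq> Sigma {..<5} (\<lambda>r. {- int K..<c r})"
      by auto
  qed auto
  then have "(\<Sum>y | - 5 * int K \<le> y \<and> y div 5 < c (nat (y mod 5)). f y)
      = (\<Sum>z\<in>Sigma {..<5} (\<lambda>r. {- int K..<c r}). f (?pos z))"
    by (simp add: sum.reindex_bij_betw)
  also have "\<dots> = (\<Sum>r<5. \<Sum>m\<in>{- int K..<c r}. f (int r + 5 * m))"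
    by (simp add: sum.Sigma prod.case_distrib)
  finally show ?thesis .
qed

lemma beta_window:
  assumes la: "is_partition la" and "length la \<le> n"
  shows "range (beta la) \<inter> {- int n..} = beta la ` {..<n}"
proof
  show "range (beta la) \<inter> {- int n..} \<subseteq> beta la ` {..<n}"
  proof
    fix y assume "y \<in> range (beta la) \<inter> {- int n..}"
    then obtain i where "y = beta la i" "- int n \<le> beta la i" by auto
    moreover have "i < n"
      using beta_beyond_length[of la i] \<open>length la \<le> n\<close> calculation(2) by (cases "i < n") auto
    ultimately show "y \<in> beta la ` {..<n}" by auto
  qed
  show "beta la ` {..<n} \<subseteq> range (beta la) \<inter> {- int n..}"
  proof
    fix y assume "y \<in> beta la ` {..<n}"
    then obtain i where "i < n" "y = beta la i" by auto
    then show "y \<in> range (beta la) \<inter> {- int n..}" using beta_lower_bound[of i la] by auto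
  qed
qed

text \<open>Beads of \<open>la\<close> and of the empty partition are summed runner by runner inside a window
  \<open>{-5K..}\<close> that contains all beads where the two differ.\<close>
lemma sum_beta_abacus:
  fixes f :: "int \<Rightarrow> int" and F :: "nat \<Rightarrow> int \<Rightarrow> int"
  assumes la: "is_partition la" and ab: "abacus la c"
    and F: "\<And>r m. r < 5 \<Longrightarrow> F r (m + 1) - F r m = f (int r + 5 * m)"
  shows "(\<Sum>i<length la. f (beta la i) - f (- int i - 1)) = (\<Sum>r<5. F r (c r) - F r 0)"
proof -
  define K where "K = length la + (\<Sum>r<5. nat (- c r))"
  have K: "- int K \<le> c r" if "r < 5" for r
    using le_sum_nat_levels[of r "\<lambda>r. - c r"] that by (simp add: K_def)
  have window: "(\<Sum>i<5 * K. f (beta mu i)) = (\<Sum>r<5. F r (d r) - F r (- int K))"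
    if mu: "is_partition mu" "abacus mu d" "length mu \<le> 5 * K" and d: "\<And>r. r < 5 \<Longrightarrow> - int K \<le> d r"
    for mu d
  proof -
    have "inj (beta mu)" using beta_strict_antimono[OF mu(1)] by (metis injI linorder_neqE_nat less_irrefl)
    then have "(\<Sum>i<5 * K. f (beta mu i)) = (\<Sum>y\<in>range (beta mu) \<inter> {- int (5 * K)..}. f y)"
      using beta_window[OF mu(1,3)] by (simp add: sum.reindex inj_on_subset)
    also have "range (beta mu) \<inter> {- int (5 * K)..} = {y. - 5 * int K \<le> y \<and> y div 5 < d (nat (y mod 5))}"
      using mu(2) by (auto simp: abacus_def)
    also have "(\<Sum>y | - 5 * int K \<le> y \<and> y div 5 < d (nat (y mod 5)). f y)
        = (\<Sum>r<5. \<Sum>m\<in>{- int K..<d r}. f (int r + 5 * m))"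
      by (rule sum_below_levels[of K d f, OF d])
    also have "\<dots> = (\<Sum>r<5. F r (d r) - F r (- int K))"
      by (rule sum.cong[OF refl], rule sum_int_telescope) (use F d in auto)
    finally show ?thesis .
  qed
  have "length la \<le> 5 * K" by (simp add: K_def)
  note full = window[OF la ab this K]
  have empty: "(\<Sum>i<5 * K. f (beta [] i)) = (\<Sum>r<5. F r 0 - F r (- int K))"
    using window[OF _ abacus_empty] by (simp add: is_partition_def)
  have "(\<Sum>i<length la. f (beta la i) - f (- int i - 1)) = (\<Sum>i<5 * K. f (beta la i) - f (beta [] i))"
    by (intro sum.mono_neutral_cong_left) (auto simp: K_def beta_beyond_length)
  also have "\<dots> = (\<Sum>r<5. F r (c r) - F r (- int K)) - (\<Sum>r<5. F r 0 - F r (- int K))"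
    by (simp only: sum_subtractf full empty)
  also have "\<dots> = (\<Sum>r<5. F r (c r) - F r 0)"
    by (simp add: sum_subtractf)
  finally show ?thesis .
qed

lemma card_below_levels:
  assumes "\<And>r. r < 5 \<Longrightarrow> - int K \<le> c r"
  shows "int (card {y. - 5 * int K \<le> y \<and> y div 5 < c (nat (y mod 5))}) = (\<Sum>r<5. c r) + 5 * int K"
proof -
  have "int (card {y. - 5 * int K \<le> y \<and> y div 5 < c (nat (y mod 5))}) = (\<Sum>r<5. \<Sum>m\<in>{- int K..<c r}. 1)"
    using sum_below_levels[of K c "\<lambda>_. 1", OF assms] by simp
  also have "\<dots> = (\<Sum>r<5. c r + int K)"
  proof (rule sum.cong[OF refl])
    fix r :: nat assume "r \<in> {..<5}"
    then show "(\<Sum>m\<in>{- int K..<c r}. 1) = c r + int K" using assms[of r] by simp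
  qed
  finally show ?thesis by (simp add: sum.distrib)
qed

lemma abacus_exists:
  assumes charge: "(\<Sum>r<5. c r) = 0"
  obtains la where "is_partition la" "abacus la c"
proof -
  define K where "K = (\<Sum>r<5. nat (- c r))"
  have K: "- int K \<le> c r" if "r < 5" for r
    using le_sum_nat_levels[of r "\<lambda>r. - c r"] that by (simp add: K_def)
  define B where "B = (\<Sum>r<5. nat (c r))"
  have B: "c r \<le> int B" if "r < 5" for r
    using le_sum_nat_levels[of r c] that by (simp add: B_def)
  define F where "F = {y. - 5 * int K \<le> y \<and> y div 5 < c (nat (y mod 5))}"
  have "F \<subseteq> {- 5 * int K..<5 * int B}"
  proof
    fix y assume "y \<in> F"
    moreover have "c (nat (y mod 5)) \<le> int B" using B[of "nat (y mod 5)"] by simp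
    ultimately show "y \<in> {- 5 * int K..<5 * int B}" by (auto simp: F_def)
  qed
  then have "finite F" by (rule finite_subset) simp
  have "int (card F) = int (5 * K)" using card_below_levels[of K c, OF K] charge by (simp add: F_def)
  then have "card F = 5 * K" by linarith
  moreover have "F \<subseteq> {- int (5 * K)..}" by (auto simp: F_def)
  ultimately obtain la where la: "is_partition la" "range (beta la) = F \<union> {..< - int (5 * K)}"
    using beta_range_exists \<open>finite F\<close> by metis
  have "y div 5 < c (nat (y mod 5))" if "y < - 5 * int K" for y
  proof -
    have "y div 5 < - int K" using that by linarith
    moreover have "- int K \<le> c (nat (y mod 5))" using K[of "nat (y mod 5)"] by simp
    ultimately show ?thesis by simp
  qed
  then have "F \<union> {..< - int (5 * K)} = {y. y div 5 < c (nat (y mod 5))}"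
    by (auto simp: F_def)
  then show thesis using la that by (simp add: abacus_def)
qed

section \<open>Size, n-vector and srank on the abacus\<close>

lemma abacus_charge:
  assumes "is_partition la" "abacus la c"
  shows "(\<Sum>r<5. c r) = 0"
  using sum_beta_abacus[OF assms, where f = "\<lambda>_. 1" and F = "\<lambda>_ m. m"] by simp

lemma abacus_size:
  assumes "is_partition la" "abacus la c"
  shows "2 * int (sum_list la) = (\<Sum>r<5. 2 * int r * c r + 5 * (c r * (c r - 1)))"
proof -
  have "2 * int (sum_list la) = (\<Sum>i<length la. 2 * beta la i - 2 * (- int i - 1))"
    by (simp add: sum_list_sum_nth atLeast0LessThan sum_distrib_left beta_def part_def)
  also have "\<dots> = (\<Sum>r<5. 2 * int r * c r + 5 * (c r * (c r - 1)))"
    using sum_beta_abacus[OF assms, where f = "\<lambda>y. 2 * y" and F = "\<lambda>r m. 2 * int r * m + 5 * (m * (m - 1))"]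
    by (simp add: algebra_simps)
  finally show ?thesis .
qed

lemma mod_eq_succ_iff: "x mod n = (y + 1) mod n \<longleftrightarrow> (x - 1) mod n = y mod n" for x y n :: int
  by (simp add: mod_eq_dvd_iff algebra_simps)

lemma card_less_Suc_filter:
  "card {b. b < Suc p \<and> P b} = card {b. b < p \<and> P b} + of_bool (P p)"
proof -
  have "{b. b < Suc p \<and> P b} = (if P p then insert p {b. b < p \<and> P b} else {b. b < p \<and> P b})"
    by (auto simp: less_Suc_eq)
  then show ?thesis by simp
qed

text \<open>The labels along a row are consecutive residues, so only the two ends of the row survive in
  the difference of two consecutive label counts.\<close>
lemma card_row_label_diff:
  assumes "m < 5"
  shows "int (card {b. b < p \<and> (int b - int a) mod 5 = int m})
       - int (card {b. b < p \<and> (int b - int a) mod 5 = int ((m + 1) mod 5)})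
       = of_bool ((int p - int a - 1) mod 5 = int m) - of_bool ((- int a - 1) mod 5 = int m)"
proof (induction p)
  case (Suc p)
  have "int ((m + 1) mod 5) = (int m + 1) mod 5" "int m mod 5 = int m"
    using assms by (simp_all add: of_nat_mod ac_simps)
  then have "(int p - int a) mod 5 = int ((m + 1) mod 5) \<longleftrightarrow> (int p - int a - 1) mod 5 = int m"
    by (simp add: mod_eq_succ_iff)
  with Suc.IH show ?case by (simp add: card_less_Suc_filter)
qed simp

lemma r_count_eq_sum_rows:
  "r_count la i = (\<Sum>a<length la. card {b. b < part la a \<and> (int b - int a) mod 5 = i})"
proof -
  have "{(a, b) \<in> diagram la. (int b - int a) mod 5 = i}
      = Sigma {..<length la} (\<lambda>a. {b. b < part la a \<and> (int b - int a) mod 5 = i})"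
    by (auto simp: diagram_def part_def)
  then show ?thesis by (simp add: r_count_def card_SigmaI)
qed

lemma abacus_nvec:
  assumes la: "is_partition la" and ab: "abacus la c" and "m < 5"
  shows "nvec la m = c m"
proof -
  have "nvec la m = (\<Sum>a<length la. of_bool (beta la a mod 5 = int m)
                                  - of_bool ((- int a - 1) mod 5 = int m))"
    using card_row_label_diff[OF \<open>m < 5\<close>]
    by (simp add: nvec_def r_count_eq_sum_rows sum_subtractf[symmetric] beta_def)
  also have "\<dots> = (\<Sum>r<5. (if r = m then c r else 0) - (if r = m then 0 else 0))"
    by (rule sum_beta_abacus[OF la ab]) auto
  also have "\<dots> = c m" using \<open>m < 5\<close> by simp
  finally show ?thesis .
qed

lemma num_odd_eq_sum: "int (num_odd la) = (\<Sum>a<length la. of_bool (odd (part la a)))"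
proof -
  have "{i. i < length la \<and> odd (la ! i)} = {..<length la} \<inter> {a. odd (part la a)}"
    by (auto simp: part_def)
  then show ?thesis by (simp add: num_odd_def length_filter_conv_card)
qed

lemma down_closed_nat_set_eq:
  fixes S :: "nat set"
  assumes "finite S" "\<And>a b. a \<in> S \<Longrightarrow> b \<le> a \<Longrightarrow> b \<in> S"
  shows "S = {..<card S}"
proof (cases "S = {}")
  case False
  then have "S = {..Max S}" using assms Max_in Max_ge by (auto intro: Max_ge)
  then show ?thesis by (metis card_atMost lessThan_Suc_atMost)
qed simp

lemma sum_alternating_sign: "(\<Sum>a<n. (-1::int) ^ a) = of_bool (odd n)"
  by (induction n) auto

lemma conjugate_eq: "conjugate la = map (\<lambda>k. card {a. a < length la \<and> k < part la a}) [0..<part la 0]"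
proof -
  have "(if la = [] then 0 else hd la) = part la 0" by (cases la) (auto simp: part_def)
  moreover have "length (filter (\<lambda>x. k < x) la) = card {a. a < length la \<and> k < part la a}" for k
    unfolding length_filter_conv_card part_def by (rule arg_cong[where f = card]) auto
  ultimately show ?thesis by (simp add: conjugate_def)
qed

text \<open>Column \<open>k\<close> of \<open>la\<close> is an initial segment of rows, so its length is odd iff the alternating
  sum of \<open>(-1)\<^sup>a\<close> over its rows \<open>a\<close> is \<open>1\<close>; summing over columns first and rows second gives
  the claim.\<close>
lemma num_odd_conjugate:
  assumes la: "is_partition la"
  shows "int (num_odd (conjugate la)) = (\<Sum>a<length la. (-1) ^ a * int (part la a))"
proof -
  define L where "L = length la"
  define rows where "rows k = {a. a < L \<and> k < part la a}" for k
  have rows_eq: "rows k = {..<card (rows k)}" for k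
    using part_antimono[OF la] by (intro down_closed_nat_set_eq) (auto simp: rows_def intro: less_le_trans)
  have "{i. i < part la 0 \<and> odd (map (\<lambda>k. card (rows k)) [0..<part la 0] ! i)}
      = {..<part la 0} \<inter> {k. odd (card (rows k))}"
    by auto
  then have "int (num_odd (conjugate la)) = (\<Sum>k<part la 0. of_bool (odd (card (rows k))))"
    by (simp add: num_odd_def conjugate_eq length_filter_conv_card rows_def L_def)
  also have "\<dots> = (\<Sum>k<part la 0. \<Sum>a\<in>rows k. (-1::int) ^ a)"
  proof (rule sum.cong[OF refl])
    fix k
    have "(\<Sum>a\<in>rows k. (-1::int) ^ a) = (\<Sum>a<card (rows k). (-1) ^ a)"
      using arg_cong[OF rows_eq[of k], of "sum (\<lambda>a. (-1::int) ^ a)"] .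
    then show "of_bool (odd (card (rows k))) = (\<Sum>a\<in>rows k. (-1::int) ^ a)"
      by (simp add: sum_alternating_sign)
  qed
  also have "\<dots> = (\<Sum>a<L. \<Sum>k\<in>{k \<in> {..<part la 0}. k < part la a}. (-1::int) ^ a)"
  proof -
    have "rows k = {a \<in> {..<L}. k < part la a}" for k by (auto simp: rows_def)
    then show ?thesis by (simp only:) (rule sum.swap_restrict; simp)
  qed
  also have "\<dots> = (\<Sum>a<L. (-1) ^ a * int (part la a))"
  proof (rule sum.cong[OF refl])
    fix a
    have "{k \<in> {..<part la 0}. k < part la a} = {..<part la a}"
      using part_antimono[OF la, of 0 a] by auto
    then show "(\<Sum>k\<in>{k \<in> {..<part la 0}. k < part la a}. (-1::int) ^ a) = (-1) ^ a * int (part la a)"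
      by simp
  qed
  finally show ?thesis by (simp add: L_def)
qed

lemma srank_row_mod4:
  "(of_bool (odd p) - (-1) ^ a * int p) mod 4 = (int p + of_bool (even (p + a)) - of_bool (even a)) mod (4::int)"
  by (cases "even a"; cases "even p") (auto simp: minus_one_power_iff elim!: evenE oddE, presburger+)

text \<open>Modulo 4, row \<open>a\<close> contributes \<open>\<lambda>\<^sub>a\<close> plus the change of parity of its bead, and the odd beads
  are then counted runner by runner.\<close>
lemma abacus_srank:
  assumes la: "is_partition la" and ab: "abacus la c"
  shows "srank la mod 4 = (int (sum_list la) + (\<Sum>r<5. (c r + of_bool (odd r)) div 2)) mod 4"
proof -
  define L where "L = length la"
  have "srank la = (\<Sum>a<L. of_bool (odd (part la a)) - (-1) ^ a * int (part la a))"
    unfolding srank_def num_odd_conjugate[OF la] num_odd_eq_sum[of la] by (simp add: sum_subtractf L_def)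
  then have "srank la mod 4 = (\<Sum>a<L. (of_bool (odd (part la a)) - (-1) ^ a * int (part la a)) mod 4) mod 4"
    by (simp only: mod_sum_eq)
  also have "\<dots> = (\<Sum>a<L. (int (part la a) + of_bool (even (part la a + a)) - of_bool (even a)) mod 4) mod 4"
    by (simp only: srank_row_mod4)
  also have "\<dots> = (\<Sum>a<L. int (part la a) + of_bool (even (part la a + a)) - of_bool (even a)) mod 4"
    by (rule mod_sum_eq)
  also have "(\<Sum>a<L. int (part la a) + of_bool (even (part la a + a)) - of_bool (even a))
      = int (sum_list la) + (\<Sum>a<L. of_bool (odd (beta la a)) - of_bool (odd (- int a - 1)))"
  proof -
    have "odd (int p - int a - 1) \<longleftrightarrow> even (p + a)" "odd (- int a - 1) \<longleftrightarrow> even a" for p a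
      by presburger+
    then show ?thesis
      by (simp add: sum.distrib sum_subtractf beta_def L_def sum_list_sum_nth atLeast0LessThan part_def)
  qed
  also have "(\<Sum>a<L. of_bool (odd (beta la a)) - of_bool (odd (- int a - 1)))
      = (\<Sum>r<5. (c r + of_bool (odd r)) div 2 - (0 + of_bool (odd r)) div 2)"
    unfolding L_def
    by (rule sum_beta_abacus[OF la ab]) (cases "odd r"; simp; presburger)
  finally show ?thesis by simp
qed
section \<open>Coordinates of 5-cores\<close>

type_synonym vec4 = "int \<times> int \<times> int \<times> int"

text \<open>A 5-core is determined by \<open>(n\<^sub>0, \<dots>, n\<^sub>3)\<close>; completed by \<open>n\<^sub>4 = -(n\<^sub>0 + \<dots> + n\<^sub>3)\<close> these are
  the levels of the runners of its abacus.\<close>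
definition levels :: "vec4 \<Rightarrow> nat \<Rightarrow> int" where
  "levels v r = (case v of (c0, c1, c2, c3) \<Rightarrow>
     if r = 0 then c0 else if r = 1 then c1 else if r = 2 then c2 else if r = 3 then c3
     else - (c0 + c1 + c2 + c3))"

definition twice_size :: "vec4 \<Rightarrow> int" where
  "twice_size v = (\<Sum>r<5. 2 * int r * levels v r + 5 * (levels v r * (levels v r - 1)))"

definition srank_shift :: "vec4 \<Rightarrow> int" where
  "srank_shift v = (\<Sum>r<5. (levels v r + of_bool (odd r)) div 2)"

definition crank_vec :: "vec4 \<Rightarrow> int" where
  "crank_vec v = (case v of (c0, c1, c2, c3) \<Rightarrow> (2 * (1 + c0 - c1 - c2 + c3)) mod 5)"

lemma sum_lessThan_5: "(\<Sum>r<(5::nat). g r) = g 0 + g 1 + g 2 + g 3 + (g 4 :: 'a :: comm_monoid_add)"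
  by (simp add: eval_nat_numeral ac_simps)

lemma levels_charge: "(\<Sum>r<5. levels v r) = 0"
  by (cases v) (simp add: sum_lessThan_5 levels_def)

definition core_vec :: "nat list \<Rightarrow> vec4" where
  "core_vec la = (nvec la 0, nvec la 1, nvec la 2, nvec la 3)"

lemma abacus_cong:
  assumes "abacus la c" "\<And>r. r < 5 \<Longrightarrow> c' r = c r"
  shows "abacus la c'"
proof -
  have "nat (y mod 5) < 5" for y :: int by simp
  then show ?thesis using assms by (simp add: abacus_def)
qed

lemma abacus_core_vec:
  assumes "is_5core la"
  shows "abacus la (levels (core_vec la))"
proof -
  have la: "is_partition la" using assms by (simp add: is_5core_def)
  obtain c where ab: "abacus la c" using is_5core_imp_abacus[OF assms] .
  have charge: "c 0 + c 1 + c 2 + c 3 + c 4 = 0"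
    using abacus_charge[OF la ab] by (simp add: sum_lessThan_5)
  have "levels (core_vec la) r = c r" if "r < 5" for r
  proof -
    have "r = 0 \<or> r = 1 \<or> r = 2 \<or> r = 3 \<or> r = 4" using that by auto
    then show ?thesis
      using abacus_nvec[OF la ab] charge by (auto simp: levels_def core_vec_def)
  qed
  then show ?thesis using abacus_cong[OF ab] by blast
qed

lemma twice_size_core_vec:
  assumes "is_5core la"
  shows "twice_size (core_vec la) = 2 * int (sum_list la)"
  using abacus_size[OF _ abacus_core_vec[OF assms]] assms by (simp add: twice_size_def is_5core_def)

lemma srank_core_vec:
  assumes "is_5core la"
  shows "srank la mod 4 = (int (sum_list la) + srank_shift (core_vec la)) mod 4"
  using abacus_srank[OF _ abacus_core_vec[OF assms]] assms by (simp add: srank_shift_def is_5core_def)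

lemma crank5_core_vec: "crank5 la = crank_vec (core_vec la)"
  by (simp add: crank5_def crank_vec_def core_vec_def)

lemma bij_core_vec: "bij_betw core_vec {la. is_5core la} UNIV"
proof (rule bij_betw_imageI)
  show "inj_on core_vec {la. is_5core la}"
  proof (rule inj_onI)
    fix la mu assume "la \<in> {la. is_5core la}" "mu \<in> {la. is_5core la}" "core_vec la = core_vec mu"
    then have "range (beta la) = range (beta mu)" "is_partition la" "is_partition mu"
      using abacus_core_vec[of la] abacus_core_vec[of mu] by (auto simp: abacus_def is_5core_def)
    then show "la = mu" using partition_eq_if_beta_range_eq by blast
  qed
  show "core_vec ` {la. is_5core la} = UNIV"
  proof (intro set_eqI iffI)
    fix v :: vec4
    obtain la where la: "is_partition la" and ab: "abacus la (levels v)"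
      using abacus_exists[OF levels_charge] .
    have "core_vec la = v" using abacus_nvec[OF la ab] by (cases v) (simp add: core_vec_def levels_def)
    then show "v \<in> core_vec ` {la. is_5core la}" using abacus_imp_is_5core[OF la ab] by blast
  qed simp
qed

lemma card_cores5_eq:
  "card {la \<in> cores5 N. srank la mod 4 = i \<and> P (crank5 la)}
     = card {v. twice_size v = 2 * int N \<and> (int N + srank_shift v) mod 4 = i \<and> P (crank_vec v)}"
proof (rule bij_betw_same_card, rule bij_betw_subset[OF bij_core_vec])
  show "{la \<in> cores5 N. srank la mod 4 = i \<and> P (crank5 la)} \<subseteq> {la. is_5core la}"
    by (auto simp: cores5_def)
  show "core_vec ` {la \<in> cores5 N. srank la mod 4 = i \<and> P (crank5 la)}
      = {v. twice_size v = 2 * int N \<and> (int N + srank_shift v) mod 4 = i \<and> P (crank_vec v)}"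
  proof (intro set_eqI iffI)
    fix v assume "v \<in> {v. twice_size v = 2 * int N \<and> (int N + srank_shift v) mod 4 = i \<and> P (crank_vec v)}"
    moreover obtain la where "is_5core la" "core_vec la = v"
      using bij_core_vec by (metis UNIV_I bij_betw_imp_surj_on imageE mem_Collect_eq)
    ultimately show "v \<in> core_vec ` {la \<in> cores5 N. srank la mod 4 = i \<and> P (crank5 la)}"
      using twice_size_core_vec srank_core_vec crank5_core_vec by (force simp: cores5_def)
  qed (auto simp: cores5_def twice_size_core_vec srank_core_vec crank5_core_vec)
qed

section \<open>From \<open>n\<close> to \<open>5 n + 4\<close>\<close>

text \<open>One explicit affine map for each crank class \<open>j\<close> (values of \<open>j\<close> beyond 4 fall into the last
  case), chosen so that size + 1 is multiplied by 5 and the crank becomes \<open>j\<close>.\<close>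
definition lift :: "int \<Rightarrow> vec4 \<Rightarrow> vec4" where
  "lift j = (\<lambda>(a, b, c, d).
     if j = 0 then (- 2 * a - 2 * c - d + 1, - a - b + c + d + 1, - 2 * b - c - 2 * d, a + 2 * b + 2 * c - 1)
     else if j = 1 then (- 2 * a - b - 2 * d + 1, 2 * a + 2 * b + c - 1, a + 2 * c + 2 * d, - 2 * b - 2 * c - d)
     else if j = 2 then (a - b + c - d, - a - 2 * b - 2 * c + 1, 2 * a + 2 * b + d - 1, b + 2 * c + 2 * d)
     else if j = 3 then (2 * a + c + 2 * d, 2 * b + 2 * c + d, - 2 * a - b - 2 * c + 1, a + b - c - d - 1)
     else (a + 2 * b + 2 * d, - b - 2 * c - 2 * d, - a + b + c - d, - 2 * a - 2 * b - c + 1))"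

lemma twice_size_lift: "twice_size (lift j v) = 5 * twice_size v + 8"
  by (cases v) (simp add: lift_def twice_size_def levels_def sum_lessThan_5 algebra_simps)

lemma crank_vec_lift:
  assumes "j \<in> {0..4}"
  shows "crank_vec (lift j v) = j"
proof -
  have "j = 0 \<or> j = 1 \<or> j = 2 \<or> j = 3 \<or> j = 4" using assms by auto
  then show ?thesis by (cases v) (auto simp: lift_def crank_vec_def algebra_simps; presburger)
qed

lemma inj_lift: "inj (lift j)"
proof (rule injI)
  fix v w assume "lift j v = lift j w"
  then show "v = w" by (cases v; cases w) (auto simp: lift_def split: if_splits; linarith)
qed

lemma two_mul_div2: "2 * (x div 2) = x - of_bool (odd x)" for x :: int
  by (simp add: minus_mod_eq_mult_div[symmetric] odd_iff_mod_2_eq_one)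

lemma srank_shift_parity: "2 * srank_shift v = 2 - (\<Sum>r<5. of_bool (odd (levels v r + int r)))"
proof -
  have "2 * srank_shift v = (\<Sum>r<5. levels v r + of_bool (odd r) - of_bool (odd (levels v r + of_bool (odd r))))"
    by (simp add: srank_shift_def sum_distrib_left two_mul_div2)
  also have "\<dots> = 2 - (\<Sum>r<5. of_bool (odd (levels v r + int r)))"
    using levels_charge[of v] by (simp add: sum_lessThan_5)
  finally show ?thesis .
qed

lemma srank_shift_lift: "srank_shift (lift j v) = srank_shift v"
proof -
  obtain a b c d where v: "v = (a, b, c, d)" by (cases v)
  have "(\<Sum>r<5. of_bool (odd (levels (lift j v) r + int r))) = (\<Sum>r<5. of_bool (odd (levels v r + int r)) :: int)"
    unfolding v lift_def levels_def sum_lessThan_5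
    by (cases "even a"; cases "even b"; cases "even c"; cases "even d"; simp)
  then show ?thesis using srank_shift_parity[of v] srank_shift_parity[of "lift j v"] by simp
qed

lemma twice_size_mod5: "twice_size (a, b, c, d) mod 5 = (2 * (- 4 * a - 3 * b - 2 * c - d)) mod 5"
proof -
  have "twice_size (a, b, c, d) = 2 * (- 4 * a - 3 * b - 2 * c - d)
     + 5 * (a * (a - 1) + b * (b - 1) + c * (c - 1) + d * (d - 1) + (a + b + c + d) * (a + b + c + d + 1))"
    by (simp add: twice_size_def levels_def sum_lessThan_5 algebra_simps)
  then show ?thesis by (simp only: mod_mult_self2)
qed

lemma lift_surj:
  assumes "twice_size w mod 5 = 3" "crank_vec w = j" "j \<in> {0..4}"
  obtains v where "lift j v = w"
proof -
  obtain a b c d where w: "w = (a, b, c, d)" by (cases w)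
  define s t where "s = (2 * (- 4 * a - 3 * b - 2 * c - d)) div 5" and "t = (2 * (1 + a - b - c + d)) div 5"
  have size: "2 * (- 4 * a - 3 * b - 2 * c - d) = 5 * s + 3"
    using assms(1) twice_size_mod5[of a b c d] div_mult_mod_eq[of "2 * (- 4 * a - 3 * b - 2 * c - d)" 5]
    by (simp add: w s_def)
  have crank: "2 * (1 + a - b - c + d) = 5 * t + j"
    using assms(2) div_mult_mod_eq[of "2 * (1 + a - b - c + d)" 5] by (simp add: w t_def crank_vec_def)
  txt \<open>The preimage is affine in \<open>a, b, c, d\<close> and the quotients \<open>s, t\<close> of the two congruences; up to
    constants, its coordinates are four consecutive ones (cyclically) among the following five.\<close>
  define qA qB qC qD qE where "qA = 2 * b + 2 * c - d + s + 3 * t" and "qB = - a + b + c - d + 3 * t"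
    and "qC = 2 * a + 4 * b + 3 * c + 2 * s + 3 * t" and "qD = 5 * a + 6 * b + 4 * c + 4 * s + 3 * t"
    and "qE = 4 * a + 5 * b + 4 * c + 3 * s + 3 * t"
  note q_defs = qA_def qB_def qC_def qD_def qE_def
  consider "j = 0" | "j = 1" | "j = 2" | "j = 3" | "j = 4" using assms(3) by force
  then show thesis
  proof cases
    case 1
    show thesis
      by (rule that[of "(qA, qB - 1, qC, qD + 1)"]) (use 1 size crank in \<open>simp add: w lift_def q_defs\<close>)
  next
    case 2
    show thesis
      by (rule that[of "(qC + 1, qD + 2, qE + 1, qA)"]) (use 2 size crank in \<open>simp add: w lift_def q_defs\<close>)
  next
    case 3
    show thesis
      by (rule that[of "(qE + 2, qA + 1, qB, qC + 1)"]) (use 3 size crank in \<open>simp add: w lift_def q_defs\<close>)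
  next
    case 4
    show thesis
      by (rule that[of "(qB + 1, qC + 2, qD + 3, qE + 2)"]) (use 4 size crank in \<open>simp add: w lift_def q_defs\<close>)
  next
    case 5
    show thesis
      by (rule that[of "(qD + 4, qE + 3, qA + 2, qB + 1)"]) (use 5 size crank in \<open>simp add: w lift_def q_defs\<close>)
  qed
qed

lemma bij_betw_lift:
  assumes "j \<in> {0..4}"
  shows "bij_betw (lift j) {v. twice_size v = 2 * int n \<and> (int n + srank_shift v) mod 4 = i}
           {w. twice_size w = 2 * int (5 * n + 4) \<and> (int (5 * n + 4) + srank_shift w) mod 4 = i
               \<and> crank_vec w = j}"
proof (rule bij_betw_imageI)
  show "inj_on (lift j) {v. twice_size v = 2 * int n \<and> (int n + srank_shift v) mod 4 = i}"
    using inj_lift inj_on_subset by blast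
  have shift: "(5 * int n + 4 + s) mod 4 = (int n + s) mod 4" for s
  proof -
    have "5 * int n + 4 + s = (int n + s) + 4 * (int n + 1)" by simp
    then show ?thesis by (simp only: mod_mult_self2)
  qed
  show "lift j ` {v. twice_size v = 2 * int n \<and> (int n + srank_shift v) mod 4 = i}
      = {w. twice_size w = 2 * int (5 * n + 4) \<and> (int (5 * n + 4) + srank_shift w) mod 4 = i
            \<and> crank_vec w = j}"
  proof (intro set_eqI iffI)
    fix w
    assume w: "w \<in> {w. twice_size w = 2 * int (5 * n + 4) \<and> (int (5 * n + 4) + srank_shift w) mod 4 = i
                      \<and> crank_vec w = j}"
    then have "twice_size w mod 5 = (3 + 5 * (2 * int n + 1)) mod 5" by (simp add: ac_simps)
    also have "\<dots> = 3" by presburger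
    finally have "twice_size w mod 5 = 3" .
    then obtain v where v: "lift j v = w" using lift_surj w assms by blast
    have "twice_size v = 2 * int n" using w v twice_size_lift[of j v] by simp
    moreover have "(int n + srank_shift v) mod 4 = i" using w v srank_shift_lift[of j v] shift by simp
    ultimately show "w \<in> lift j ` {v. twice_size v = 2 * int n \<and> (int n + srank_shift v) mod 4 = i}"
      using v by blast
  qed (auto simp: twice_size_lift srank_shift_lift crank_vec_lift[OF assms] shift)
qed

lemma a5j_eq_a5:
  assumes "j \<in> {0..4}"
  shows "a5j j i (5 * n + 4) = a5 i n"
proof -
  have "a5j j i (5 * n + 4) = card {w. twice_size w = 2 * int (5 * n + 4)
      \<and> (int (5 * n + 4) + srank_shift w) mod 4 = i \<and> crank_vec w = j}"
    using card_cores5_eq[where P = "\<lambda>x. x = j"] by (simp add: a5j_def)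
  also have "\<dots> = card {v. twice_size v = 2 * int n \<and> (int n + srank_shift v) mod 4 = i}"
    using bij_betw_same_card[OF bij_betw_lift[OF assms]] by simp
  also have "\<dots> = a5 i n"
    using card_cores5_eq[where P = "\<lambda>_. True"] by (simp add: a5_def)
  finally show ?thesis .
qed

lemma finite_cores5: "finite (cores5 N)"
proof -
  have "length la \<le> sum_list la" if "0 \<notin> set la" for la :: "nat list"
    using that by (induction la) auto
  then have "cores5 N \<subseteq> {xs. set xs \<subseteq> {..N} \<and> length xs \<le> N}"
    using member_le_sum_list by (fastforce simp: cores5_def is_5core_def is_partition_def)
  then show ?thesis by (rule finite_subset) (rule finite_lists_length_le, simp)
qed

lemma a5_eq_sum_a5j: "a5 i N = (\<Sum>j\<in>{0..4}. a5j j i N)"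
proof -
  have "{la \<in> cores5 N. srank la mod 4 = i}
      = (\<Union>j\<in>{0..4}. {la \<in> cores5 N. srank la mod 4 = i \<and> crank5 la = j})"
    by (auto simp: crank5_def)
  moreover have "card (\<Union>j\<in>{0..4}. {la \<in> cores5 N. srank la mod 4 = i \<and> crank5 la = j})
      = (\<Sum>j\<in>{0..4}. card {la \<in> cores5 N. srank la mod 4 = i \<and> crank5 la = j})"
    by (rule card_UN_disjoint) (auto intro: finite_subset[OF _ finite_cores5])
  ultimately show ?thesis by (simp add: a5_def a5j_def)
qed

theorem mainTheorem12:
  fixes i j :: int and n :: nat
  assumes "i \<in> {0, 2}" and "j \<in> {0..4}"
  shows "real (a5j j i (5 * n + 4)) = real (a5 i (5 * n + 4)) / 5
     \<and> a5j 0 i (5 * n + 4) = a5 i n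
     \<and> a5 i (5 * n + 4) = 5 * a5 i n"
proof -
  have "a5 i (5 * n + 4) = 5 * a5 i n"
    using a5j_eq_a5[of _ i n] by (simp add: a5_eq_sum_a5j)
  then show ?thesis using a5j_eq_a5[OF assms(2)] a5j_eq_a5[of 0 i n] by simp
qed

end
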